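(* Let $k>2$ be an integer with $k\equiv 2 \pmod 4$ and let $n=\frac{1}{4}k^2-1$. If $\frac{k}{2}$ is not a prime, then any function $f:[n]\to \{-1,1\}$ with $f([n])=0$ admits a $k$-term arithmetic progression $A\subseteq[n]$ with $f(A)=0$.
   Context: $[n]=\{1,\dots,n\}$; $f(Y)=\sum_{y\in Y}f(y)$. *)

theory Defs
  imports "HOL-Computational_Algebra.Primes"
begin

definition is_kAP :: "nat \<Rightarrow> nat set \<Rightarrow> bool" where
  "is_kAP k A \<longleftrightarrow> (\<exists>a d. d \<ge> 1 \<and> A = {a + i * d | i. i < k})"

end

theory Submission
  imports Defs
begin

text \<open>Write \<open>k = 2m\<close> with \<open>m = 2h + 1 = pq\<close>, \<open>p, q > 1\<close>, so \<open>n = m\<^sup>2 - 1 = hk + 2h\<close>, and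
  suppose no \<open>k\<close>-term progression has zero sum. The sums of \<open>f\<close> over windows of \<open>k\<close>
  consecutive integers are even, move by at most 2 and never vanish, so they share one sign,
  say positive; then each is at least 2. Cutting \<open>[1, n]\<close> into a prefix of length \<open>t \<le> 2h\<close>,
  \<open>h\<close> windows and a suffix shows that all these bounds are attained, which forces
  \<open>f y = -1\<close> exactly when \<open>y mod k \<in> [1, m - 1]\<close>. Along \<open>1, 1 + p, \<dots>, 1 + (k - 1)p\<close> the
  residues mod \<open>k\<close> have period \<open>2q\<close>, and half of each period lies in \<open>[1, m - 1]\<close>.\<close>

lemma is_kAP_image:
  assumes "1 \<le> d"
  shows "is_kAP k ((\<lambda>i. a + i * d) ` {..<k})"
  unfolding is_kAP_def using assms by blast

lemma is_kAP_greaterThanAtMost: "is_kAP k {a<..a + k}"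
proof -
  have "{a<..a + k} = (\<lambda>i. Suc a + i * 1) ` {..<k}" (is "_ = ?AP")
  proof (intro equalityI subsetI)
    fix y assume "y \<in> {a<..a + k}"
    then have "y = Suc a + (y - Suc a) * 1" and "y - Suc a < k" by auto
    then show "y \<in> (\<lambda>i. Suc a + i * 1) ` {..<k}" by blast
  qed auto
  moreover have "is_kAP k ?AP" by (rule is_kAP_image) simp
  ultimately show ?thesis by simp
qed

lemma even_sum_pm1_iff:
  fixes f :: "'a \<Rightarrow> int"
  assumes "finite A" and "\<forall>x\<in>A. f x \<in> {-1, 1}"
  shows "even (sum f A) \<longleftrightarrow> even (card A)"
  using assms by (induction A rule: finite_induct) auto

lemma sum_ge_bound_eqD:
  fixes f :: "'a \<Rightarrow> int"
  assumes "finite A" and "\<forall>x\<in>A. c \<le> f x" and "sum f A \<le> of_nat (card A) * c"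
    and "x \<in> A"
  shows "f x = c"
proof (rule ccontr)
  assume "f x \<noteq> c"
  with assms have "sum (\<lambda>_. c) A < sum f A"
    by (intro sum_strict_mono_ex1) force+
  with assms(3) show False by (simp add: mult.commute)
qed

lemma even_walk_keeps_sign:
  fixes s :: "nat \<Rightarrow> int"
  assumes step: "\<And>x. x < N \<Longrightarrow> \<bar>s (Suc x) - s x\<bar> \<le> 2"
    and parity: "\<And>x. x \<le> N \<Longrightarrow> even (s x)"
    and nonzero: "\<And>x. x \<le> N \<Longrightarrow> s x \<noteq> 0"
    and start: "0 < s 0" and "x \<le> N"
  shows "0 < s x"
  using \<open>x \<le> N\<close>
proof (induction x)
  case 0 then show ?case using start by simp
next
  case (Suc x)
  have "0 < s x" using Suc by simp
  moreover have "even (s x)" using parity[of x] Suc.prems by simp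
  ultimately have "2 \<le> s x" by presburger
  then have "0 \<le> s (Suc x)" using step[of x] Suc.prems by linarith
  then show ?case using nonzero[OF Suc.prems] by linarith
qed

definition window_sum :: "(nat \<Rightarrow> int) \<Rightarrow> nat \<Rightarrow> nat \<Rightarrow> int" where
  "window_sum f K x = (\<Sum>y\<in>{x<..x + K}. f y)"

lemma window_sum_Suc:
  "window_sum f K (Suc x) = window_sum f K x - f (Suc x) + f (Suc x + K)"
proof -
  have "insert (Suc (x + K)) {x<..x + K} = insert (Suc x) {Suc x<..Suc x + K}"
    by auto
  then have "sum f (insert (Suc (x + K)) {x<..x + K}) = sum f (insert (Suc x) {Suc x<..Suc x + K})"
    by simp
  then have "window_sum f K x + f (Suc x + K) = f (Suc x) + window_sum f K (Suc x)"
    unfolding window_sum_def by simp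
  then show ?thesis by simp
qed

lemma window_sum_add:
  "window_sum f (K + L) x = window_sum f K x + window_sum f L (x + K)"
  unfolding window_sum_def
  by (subst sum.union_disjoint[symmetric]) (auto intro: sum.cong)

lemma window_sum_uminus: "window_sum (\<lambda>y. - f y) K x = - window_sum f K x"
  by (simp add: window_sum_def sum_negf)

lemma even_window_sum_iff:
  assumes "\<forall>y\<in>{x<..x + K}. f y \<in> {-1, 1}"
  shows "even (window_sum f K x) \<longleftrightarrow> even K"
  using even_sum_pm1_iff[of "{x<..x + K}" f] assms by (simp add: window_sum_def)

lemma window_sum_ge_bound:
  assumes "\<forall>y\<in>{x<..x + K}. c \<le> f y"
  shows "of_nat K * c \<le> window_sum f K x"
  using sum_bounded_below[of "{x<..x + K}" c f] assms by (simp add: window_sum_def)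

lemma window_sum_ge_bound_eqD:
  assumes "\<forall>y\<in>{x<..x + K}. c \<le> f y" and "window_sum f K x \<le> of_nat K * c"
    and "y \<in> {x<..x + K}"
  shows "f y = c"
  using sum_ge_bound_eqD[of "{x<..x + K}" c f y] assms by (simp add: window_sum_def)

lemma window_sum_const:
  assumes "\<forall>y\<in>{x<..x + K}. f y = c"
  shows "window_sum f K x = of_nat K * c"
  using assms by (simp add: window_sum_def)

lemma window_sum_mult:
  "window_sum f (h * M) x = (\<Sum>j<h. window_sum f M (x + j * M))"
proof (induction h)
  case (Suc h)
  have "window_sum f (Suc h * M) x = window_sum f (h * M) x + window_sum f M (x + h * M)"
    using window_sum_add[of f "h * M" M x] by (simp add: add.commute)
  with Suc show ?case by simp
qed (simp add: window_sum_def)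

lemma window_sums_constant_sign:
  fixes f :: "nat \<Rightarrow> int"
  assumes pm1: "\<forall>y\<in>{1..n}. f y \<in> {-1, 1}" and "even K" and "K \<le> n"
    and nonzero: "\<And>x. x + K \<le> n \<Longrightarrow> window_sum f K x \<noteq> 0"
  shows "(\<forall>x. x + K \<le> n \<longrightarrow> 0 < window_sum f K x)
    \<or> (\<forall>x. x + K \<le> n \<longrightarrow> window_sum f K x < 0)"
proof -
  let ?s = "window_sum f K"
  have step: "\<bar>?s (Suc x) - ?s x\<bar> \<le> 2" if "x < n - K" for x
  proof -
    have "f (Suc x) \<in> {-1, 1}" "f (Suc x + K) \<in> {-1, 1}" using pm1 that by auto
    then show ?thesis by (auto simp: window_sum_Suc)
  qed
  have parity: "even (?s x)" if "x \<le> n - K" for x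
  proof -
    have "\<forall>y\<in>{x<..x + K}. f y \<in> {-1, 1}"
      by (intro ballI bspec[OF pm1]) (use that \<open>K \<le> n\<close> in auto)
    then show ?thesis using even_window_sum_iff \<open>even K\<close> by blast
  qed
  have nz: "?s x \<noteq> 0" if "x \<le> n - K" for x using nonzero that \<open>K \<le> n\<close> by simp
  show ?thesis
  proof (cases "0 < ?s 0")
    case True
    then have "0 < ?s x" if "x \<le> n - K" for x
      using even_walk_keeps_sign[of "n - K" ?s] step parity nz that by blast
    then show ?thesis by auto
  next
    case False
    then have "0 < - ?s 0" using nz[of 0] by simp
    then have "0 < - ?s x" if "x \<le> n - K" for x
      using even_walk_keeps_sign[of "n - K" "\<lambda>x. - ?s x"] step parity nz that
      by (simp add: abs_minus_commute)
    then show ?thesis by force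
  qed
qed

lemma sum_lessThan_mult_mod:
  fixes g :: "nat \<Rightarrow> 'a::semiring_1"
  shows "(\<Sum>i<p * r. g (i mod r)) = of_nat p * (\<Sum>j<r. g j)"
proof -
  have "(\<Sum>i\<in>{b * r..<b * r + r}. g (i mod r)) = (\<Sum>j<r. g j)" for b
    using sum.shift_bounds_nat_ivl[of "\<lambda>i. g (i mod r)" 0 "b * r" r]
    by (simp add: add.commute atLeast0LessThan)
  then show ?thesis
    using sum.nat_group[of "\<lambda>i. g (i mod r)" r p] by simp
qed

definition block_pattern :: "nat \<Rightarrow> nat \<Rightarrow> int" where
  "block_pattern m y = (if y mod (2 * m) \<in> {1..<m} then -1 else 1)"

lemma block_pattern_progression_sum:
  assumes "p * q = m" and "1 < p" and "0 < q"
  shows "(\<Sum>i<2 * m. block_pattern m (1 + i * p)) = 0"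
proof -
  define G :: "nat \<Rightarrow> int" where "G j = (if j < q then -1 else 1)" for j
  have pattern_eq: "block_pattern m (1 + i * p) = G (i mod (2 * q))" for i
  proof -
    define j where "j = i mod (2 * q)"
    have "j < 2 * q" using \<open>0 < q\<close> by (simp add: j_def)
    then have "(j + 1) * p \<le> 2 * q * p" by (intro mult_le_mono1) simp
    also have "\<dots> = 2 * m" using assms(1) by (simp add: mult.commute)
    finally have "(j + 1) * p \<le> 2 * m" .
    then have "1 + j * p < 2 * m" using \<open>1 < p\<close> by simp
    moreover have "i * p = (i div (2 * q) * (2 * q) + j) * p" by (simp only: j_def div_mult_mod_eq)
    then have "1 + i * p = i div (2 * q) * (2 * m) + (1 + j * p)"
      using assms(1) by (simp add: algebra_simps)
    ultimately have "(1 + i * p) mod (2 * m) = 1 + j * p" by simp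
    moreover have "1 + j * p < m \<longleftrightarrow> j < q"
    proof
      assume "j < q"
      then have "(j + 1) * p \<le> m" using assms(1) mult_le_mono1[of "j + 1" q p] by (simp add: mult.commute)
      then show "1 + j * p < m" using \<open>1 < p\<close> by simp
    next
      assume "1 + j * p < m"
      show "j < q"
      proof (rule ccontr)
        assume "\<not> j < q"
        then have "m \<le> j * p" using assms(1) mult_le_mono1[of q j p] by (simp add: mult.commute)
        with \<open>1 + j * p < m\<close> show False by simp
      qed
    qed
    ultimately show ?thesis by (simp add: block_pattern_def G_def j_def)
  qed
  have "(\<Sum>j<2 * q. G j) = (\<Sum>j<q. G j) + (\<Sum>j=q..<2 * q. G j)"
    by (simp add: sum.atLeastLessThan_concat[symmetric] atLeast0LessThan[symmetric])
  also have "\<dots> = 0" by (simp add: G_def)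
  finally have G_sum: "(\<Sum>j<2 * q. G j) = 0" .
  have "p * (2 * q) = 2 * m" using assms(1) by simp
  then have "(\<Sum>i<2 * m. block_pattern m (1 + i * p)) = (\<Sum>i<p * (2 * q). G (i mod (2 * q)))"
    by (simp only: pattern_eq)
  also have "\<dots> = of_nat p * (\<Sum>j<2 * q. G j)" by (rule sum_lessThan_mult_mod)
  finally show ?thesis using G_sum by simp
qed

context
  fixes f :: "nat \<Rightarrow> int" and h M n :: nat
  assumes M_eq: "M = 4 * h + 2"
    and n_eq: "n = h * M + 2 * h"
    and pm1: "\<forall>y\<in>{1..n}. f y \<in> {-1, 1}"
    and total_zero: "window_sum f n 0 = 0"
    and windows_pos: "\<And>x. x + M \<le> n \<Longrightarrow> 0 < window_sum f M x"
begin

lemma window_sum_ge_two: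
  assumes "x + M \<le> n"
  shows "2 \<le> window_sum f M x"
proof -
  have "\<forall>y\<in>{x<..x + M}. f y \<in> {-1, 1}"
    by (intro ballI bspec[OF pm1]) (use assms in auto)
  then have "even (window_sum f M x)" using even_window_sum_iff M_eq by simp
  with windows_pos[OF assms] show ?thesis by presburger
qed

lemma minus_one_le_on:
  assumes "{x<..x + K} \<subseteq> {1..n}"
  shows "\<forall>y\<in>{x<..x + K}. -1 \<le> f y"
  using assms pm1 by fastforce

text \<open>Splitting \<open>[1, n]\<close> into a prefix of length \<open>t\<close>, \<open>h\<close> windows of length \<open>M\<close> and a
  suffix of length \<open>2h - t\<close>, the lower bounds \<open>-t\<close>, \<open>2h\<close> and \<open>t - 2h\<close> of the three parts
  add up to the total \<open>0\<close>, so all of them are attained.\<close>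
lemma tight_decomposition:
  assumes "t \<le> 2 * h"
  shows "\<forall>y\<in>{0<..t}. f y = -1"
    and "\<And>j. j < h \<Longrightarrow> window_sum f M (t + j * M) = 2"
    and "\<forall>y\<in>{t + h * M<..n}. f y = -1"
proof -
  define s where "s = 2 * h - t"
  have n_split: "n = t + h * M + s" using assms n_eq by (simp add: s_def)
  have prefix_ge: "\<forall>y\<in>{0<..0 + t}. -1 \<le> f y"
    by (rule minus_one_le_on) (use n_split in auto)
  have suffix_ge: "\<forall>y\<in>{t + h * M<..t + h * M + s}. -1 \<le> f y"
    by (rule minus_one_le_on) (use n_split in auto)
  have blocks_ge: "\<forall>j\<in>{..<h}. 2 \<le> window_sum f M (t + j * M)"
  proof
    fix j assume "j \<in> {..<h}"
    then have "j * M + M \<le> h * M" using mult_le_mono1[of "Suc j" h M] by simp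
    then show "2 \<le> window_sum f M (t + j * M)" using n_split by (intro window_sum_ge_two) simp
  qed
  have "0 = window_sum f t 0 + window_sum f (h * M) t + window_sum f s (t + h * M)"
    using total_zero by (simp add: n_split window_sum_add)
  moreover have "- int t \<le> window_sum f t 0"
    using window_sum_ge_bound[OF prefix_ge] by simp
  moreover have "- int s \<le> window_sum f s (t + h * M)"
    using window_sum_ge_bound[OF suffix_ge] by simp
  moreover have "int (2 * h) \<le> window_sum f (h * M) t"
    using sum_bounded_below[of "{..<h}" 2 "\<lambda>j. window_sum f M (t + j * M)"] blocks_ge
    by (simp add: window_sum_mult)
  ultimately have prefix_tight: "window_sum f t 0 \<le> - int t"
    and blocks_tight: "(\<Sum>j<h. window_sum f M (t + j * M)) \<le> of_nat (card {..<h}) * 2"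
    and suffix_tight: "window_sum f s (t + h * M) \<le> - int s"
    using assms by (simp_all add: s_def window_sum_mult)
  show "\<forall>y\<in>{0<..t}. f y = -1"
    using window_sum_ge_bound_eqD[OF prefix_ge] prefix_tight by simp
  show "window_sum f M (t + j * M) = 2" if "j < h" for j
    using sum_ge_bound_eqD[OF _ blocks_ge blocks_tight] that by simp
  show "\<forall>y\<in>{t + h * M<..n}. f y = -1"
    using window_sum_ge_bound_eqD[OF suffix_ge] suffix_tight n_split by simp
qed

lemma window_sum_eq_two:
  assumes "x mod M \<le> 2 * h" and "x + M \<le> n"
  shows "window_sum f M x = 2"
proof -
  have "x div M < h"
  proof (rule ccontr)
    assume "\<not> x div M < h"
    then have "h * M \<le> x div M * M" by simp
    also have "\<dots> \<le> x" by (rule div_times_less_eq_dividend)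
    finally show False using assms(2) n_eq M_eq by simp
  qed
  then show ?thesis
    using tight_decomposition(2)[OF assms(1), of "x div M"] by (simp add: mult.commute)
qed

lemma minus_one_on_low_residues:
  assumes "y \<le> n" and "y mod M \<in> {1..2 * h}"
  shows "f y = -1"
  using assms
proof (induction y rule: less_induct)
  case (less y)
  show ?case
  proof (cases "y < M")
    case True
    then show ?thesis using less.prems tight_decomposition(1)[of "2 * h"] by simp
  next
    case False
    have "M < y" using False less.prems(2) by (cases "y = M") auto
    define x where "x = y - M - 1"
    have y_eq: "y = Suc x + M" and residue: "Suc x mod M = y mod M"
      using \<open>M < y\<close> by (simp_all add: x_def le_mod_geq Suc_diff_Suc)
    then have "f (Suc x) = -1" using less M_eq by simp
    moreover have "window_sum f M (Suc x) = 2" and "window_sum f M x = 2"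
      using less.prems residue y_eq by (auto intro!: window_sum_eq_two simp: mod_Suc split: if_splits)
    ultimately show ?thesis using window_sum_Suc[of f M x] y_eq by simp
  qed
qed

lemma plus_one_on_high_residues:
  assumes "y \<in> {1..n}" and "y mod M \<notin> {1..2 * h}"
  shows "f y = 1"
proof -
  obtain x where "M dvd x" and "x + M \<le> n" and y_in: "y \<in> {x + 2 * h<..x + M}"
  proof (cases "y mod M = 0")
    case True
    then have "M dvd y" and "M \<le> y" using assms(1) M_eq by (auto simp: dvd_imp_le)
    then show ?thesis using that[of "y - M"] assms(1) M_eq by auto
  next
    case False
    then have high: "2 * h < y mod M" using assms(2) by auto
    have "y div M < h"
    proof (rule ccontr)
      assume "\<not> y div M < h"
      then have "h * M \<le> y div M * M" by simp
      then have "h * M + y mod M \<le> y" using div_mult_mod_eq[of y M] by linarith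
      then show False using assms(1) high n_eq by simp
    qed
    then have "y div M * M + M \<le> n" using n_eq mult_le_mono1[of "Suc (y div M)" h M] by simp
    moreover have "y mod M < M" using M_eq by simp
    ultimately show ?thesis
      using that[of "y div M * M"] high div_mult_mod_eq[of y M] by auto
  qed
  have low: "\<forall>z\<in>{x<..x + 2 * h}. f z = -1"
  proof
    fix z assume z: "z \<in> {x<..x + 2 * h}"
    obtain c where "x = c * M" using \<open>M dvd x\<close> by (metis dvdE mult.commute)
    with z have "z = (z - x) + c * M" by simp
    then have "z mod M = (z - x) mod M" by (metis mod_mult_self1)
    also have "\<dots> = z - x" using z M_eq by (intro mod_less) auto
    finally have "z mod M = z - x" .
    then show "f z = -1" using z \<open>x + M \<le> n\<close> M_eq by (intro minus_one_on_low_residues) auto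
  qed
  have "window_sum f M x = 2"
    using \<open>M dvd x\<close> \<open>x + M \<le> n\<close> by (intro window_sum_eq_two) auto
  moreover have "window_sum f M x = window_sum f (2 * h) x + window_sum f (2 * h + 2) (x + 2 * h)"
    using window_sum_add[of f "2 * h" "2 * h + 2" x] M_eq by (simp add: add.assoc)
  ultimately have "window_sum (\<lambda>z. - f z) (2 * h + 2) (x + 2 * h) \<le> of_nat (2 * h + 2) * -1"
    using window_sum_const[OF low] by (simp add: window_sum_uminus)
  moreover have "\<forall>z\<in>{x + 2 * h<..x + 2 * h + (2 * h + 2)}. -1 \<le> - f z"
  proof
    fix z assume "z \<in> {x + 2 * h<..x + 2 * h + (2 * h + 2)}"
    then have "z \<in> {1..n}" using M_eq \<open>x + M \<le> n\<close> by auto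
    then show "-1 \<le> - f z" using pm1 by fastforce
  qed
  ultimately show ?thesis
    using window_sum_ge_bound_eqD[of "x + 2 * h" "2 * h + 2" "-1" "\<lambda>z. - f z" y] y_in M_eq by simp
qed

lemma eq_block_pattern:
  assumes "y \<in> {1..n}"
  shows "f y = block_pattern (2 * h + 1) y"
proof -
  have "2 * (2 * h + 1) = M" using M_eq by simp
  then show ?thesis
    using minus_one_on_low_residues plus_one_on_high_residues assms
    by (auto simp: block_pattern_def)
qed

lemma zero_sum_progression:
  assumes pq: "p * q = 2 * h + 1" and "1 < p" and "1 < q"
  shows "\<exists>A. A \<subseteq> {1..n} \<and> is_kAP M A \<and> sum f A = 0"
proof -
  define m where "m = 2 * h + 1"
  have M_m: "M = 2 * m" and n_m: "n + 1 = m * m"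
    using M_eq n_eq by (simp_all add: m_def algebra_simps)
  define A where "A = (\<lambda>i. 1 + i * p) ` {..<M}"
  have terms_in: "1 + i * p \<in> {1..n}" if "i < M" for i
  proof -
    have "1 + i * p < (i + 1) * p" using \<open>1 < p\<close> by simp
    also have "\<dots> \<le> M * p" using that by (intro mult_le_mono1) simp
    also have "\<dots> = 2 * p * m" using M_m by simp
    also have "\<dots> \<le> q * p * m" using \<open>1 < q\<close> by (intro mult_le_mono1) simp
    also have "\<dots> = m * m" using pq by (simp add: m_def mult.commute)
    finally show ?thesis using n_m by simp
  qed
  have "sum f A = (\<Sum>i<M. f (1 + i * p))"
    unfolding A_def using \<open>1 < p\<close> by (subst sum.reindex) (auto simp: inj_on_def)
  also have "\<dots> = (\<Sum>i<2 * m. block_pattern m (1 + i * p))"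
    using terms_in eq_block_pattern by (simp add: M_m m_def)
  also have "\<dots> = 0"
    using block_pattern_progression_sum[of p q m] pq \<open>1 < p\<close> \<open>1 < q\<close> by (simp add: m_def)
  finally have "sum f A = 0" .
  moreover have "is_kAP M A" unfolding A_def using \<open>1 < p\<close> by (intro is_kAP_image) simp
  moreover have "A \<subseteq> {1..n}" using terms_in by (auto simp: A_def)
  ultimately show ?thesis by blast
qed

end

lemma nontrivial_factorization:
  fixes m :: nat
  assumes "1 < m" and "\<not> prime m"
  obtains p q where "p * q = m" and "1 < p" and "1 < q"
proof -
  obtain p where "p dvd m" "p \<noteq> 1" "p \<noteq> m" using assms prime_nat_iff by blast
  then obtain q where m: "m = p * q" by blast
  have "q \<noteq> 0" using assms(1) m by (metis mult_0_right not_less_zero)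
  moreover have "p \<noteq> 0" "q \<noteq> 1" using assms(1) m \<open>p \<noteq> m\<close> by auto
  ultimately show ?thesis using that m \<open>p \<noteq> 1\<close> by simp
qed

theorem proposition5p7:
  fixes k n :: nat and f :: "nat \<Rightarrow> int"
  assumes "k > 2" and "k mod 4 = 2"
    and "n = k^2 div 4 - 1"
    and "\<not> prime (k div 2)"
    and "\<forall>x\<in>{1..n}. f x \<in> {-1, 1}"
    and "(\<Sum>x\<in>{1..n}. f x) = 0"
  shows "\<exists>A. A \<subseteq> {1..n} \<and> is_kAP k A \<and> (\<Sum>x\<in>A. f x) = 0"
proof (rule ccontr)
  assume no_zero_AP: "\<not> ?thesis"
  define h where "h = k div 4"
  have k_eq: "k = 4 * h + 2" using div_mult_mod_eq[of k 4] assms(2) unfolding h_def by linarith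
  have n_eq: "n = h * k + 2 * h"
    using assms(3) by (simp add: k_eq power2_eq_square algebra_simps)
  obtain p q where pq: "p * q = 2 * h + 1" "1 < p" "1 < q"
    using nontrivial_factorization[of "2 * h + 1"] assms(1,4) k_eq by auto
  have "k \<le> n" using pq n_eq k_eq by (cases h) auto
  have total: "window_sum f n 0 = 0"
    using assms(6) by (simp add: window_sum_def atLeastSucAtMost_greaterThanAtMost[symmetric])
  have "window_sum f k x \<noteq> 0" if "x + k \<le> n" for x
    using no_zero_AP is_kAP_greaterThanAtMost[of k x] that by (force simp: window_sum_def)
  then consider "\<forall>x. x + k \<le> n \<longrightarrow> 0 < window_sum f k x"
    | "\<forall>x. x + k \<le> n \<longrightarrow> window_sum f k x < 0"
    using window_sums_constant_sign[OF assms(5) _ \<open>k \<le> n\<close>] k_eq by auto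
  then show False
  proof cases
    case 1
    then show False
      using zero_sum_progression[OF k_eq n_eq assms(5) total _ pq] no_zero_AP by blast
  next
    case 2
    then show False
      using zero_sum_progression[of k h n "\<lambda>x. - f x", OF k_eq n_eq _ _ _ pq] total
        assms(5) no_zero_AP by (force simp: window_sum_uminus sum_negf)
  qed
qed

end
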